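(* Let $\boldsymbol{x}_p=[i_p,v_p]^{\intercal}$ be the unique $T$-periodic solution of the switched system, i.e. the solution with initial value $$\boldsymbol{x}_p(0)=\left(I-\mathrm{e}^{\frac{T}{2}A_2}\mathrm{e}^{\frac{T}{2}A_1}\right)^{-1}\mathrm{e}^{\frac{T}{2}A_2}A_1^{-1}\left(\mathrm{e}^{\frac{T}{2}A_1}-I\right)\boldsymbol{b}_1 .$$ Then $i_p(0)=i_p(T/2)=i_p(T)$.
   Context: Let $R,L,C,V_{dc},T>0$. Let $\boldsymbol{x}(t)=[i(t),v(t)]^{\intercal}$. Define $$A_1=\begin{bmatrix}-\frac RL & -\frac1L\\ \frac1C & 0\end{bmatrix},\quad A_2=\begin{bmatrix}-\frac RL & \frac1L\\ -\frac1C & 0\end{bmatrix},\quad \boldsymbol{b}_1=\begin{bmatrix}\frac{V_{dc}}L\\ 0\end{bmatrix}.$$ The switched system on $t\ge0$ is: $\boldsymbol{x}'=A_1\boldsymbol{x}+\boldsymbol{b}_1$ on each interval $[(k-1)T,(k-1)T+\frac T2]$ and $\boldsymbol{x}'=A_2\boldsymbol{x}$ on each interval $[(k-1)T+\frac T2,kT]$, $k=1,2,\dots$; solutions are continuous. The matrix $I-\mathrm{e}^{\frac T2A_2}\mathrm{e}^{\frac T2A_1}$ is invertible and the solution with the stated initial value is $T$-periodic. *)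

theory Defs
  imports "HOL-Analysis.Analysis"
begin

text \<open>Matrix powers and the matrix exponential (as the exponential power series)
  for square real matrices represented as \<open>real^'n^'n\<close> (rows indexed first).\<close>

fun mat_pow :: "real^'n^'n \<Rightarrow> nat \<Rightarrow> real^'n^'n" where
  "mat_pow A 0 = mat 1"
| "mat_pow A (Suc k) = A ** mat_pow A k"

definition mat_exp :: "real^'n^'n \<Rightarrow> real^'n^'n" where
  "mat_exp A = (\<Sum>k. (1 / fact k) *\<^sub>R mat_pow A k)"

definition A1 :: "real \<Rightarrow> real \<Rightarrow> real \<Rightarrow> real^2^2" where
  "A1 R L C = vector [vector [- R / L, - 1 / L], vector [1 / C, 0]]"

definition A2 :: "real \<Rightarrow> real \<Rightarrow> real \<Rightarrow> real^2^2" where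
  "A2 R L C = vector [vector [- R / L, 1 / L], vector [- 1 / C, 0]]"

definition b1 :: "real \<Rightarrow> real \<Rightarrow> real^2" where
  "b1 L Vdc = vector [Vdc / L, 0]"

end

theory Submission imports Defs begin

text \<open>Conjugation by the voltage reflection \<open>S = diag(1, -1)\<close> turns \<open>A1\<close> into \<open>A2\<close>, so
  \<open>exp (t A2) = S exp (t A1) S\<close>. The first phase is affine with equilibrium \<open>d = (0, Vdc)\<close>,
  hence \<open>x(T/2) - d = E (x(0) - d)\<close> with \<open>E = exp (T/2 A1)\<close>. Writing \<open>P = S E\<close>, the prescribed
  initial value means \<open>(I - P\<^sup>2) x(0) = -(P + P\<^sup>2) d\<close>; as \<open>I - P\<^sup>2 = (I + P)(I - P)\<close> is
  invertible this forces \<open>x(0) = P (x(0) - d)\<close>. Therefore \<open>S x(T/2) = x(0) - d\<close>, which has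
  the same current as \<open>x(0)\<close>, and \<open>x(T) = S E S x(T/2) = P (x(0) - d) = x(0)\<close>.\<close>

section \<open>Matrix powers and the matrix exponential\<close>

lemma mat_pow_Suc_right: "mat_pow A (Suc k) = mat_pow A k ** A"
  by (induction k) (auto simp: matrix_mul_assoc)

lemma mat_pow_scaleR: "mat_pow (c *\<^sub>R A) k = (c ^ k) *\<^sub>R mat_pow A k"
  by (induction k) (auto simp: matrix_scalar_ac scalar_matrix_assoc[symmetric])

lemma mat_pow_commute: "A ** B = B ** A \<Longrightarrow> A ** mat_pow B k = mat_pow B k ** A"
  by (induction k) (simp_all add: matrix_mul_assoc, metis matrix_mul_assoc)

lemma mat_pow_conj:
  fixes S :: "real^'n^'n"
  assumes "S ** S = mat 1"
  shows "mat_pow (S ** A ** S) k = S ** mat_pow A k ** S"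
proof (induction k)
  case 0
  then show ?case using assms by simp
next
  case (Suc k)
  have "mat_pow (S ** A ** S) (Suc k) = S ** A ** (S ** S) ** mat_pow A k ** S"
    using Suc by (simp add: matrix_mul_assoc)
  also have "\<dots> = S ** mat_pow A (Suc k) ** S"
    using assms by (simp add: matrix_mul_assoc)
  finally show ?case .
qed

lemma norm_mat_pow_mult_vector_le: "norm (mat_pow A k *v v) \<le> onorm ((*v) A) ^ k * norm v"
proof (induction k arbitrary: v)
  case 0
  then show ?case by simp
next
  case (Suc k)
  have "norm (mat_pow A (Suc k) *v v) = norm (mat_pow A k *v (A *v v))"
    by (simp only: mat_pow_Suc_right matrix_vector_mul_assoc)
  also have "\<dots> \<le> onorm ((*v) A) ^ k * norm (A *v v)"
    by (rule Suc)
  also have "\<dots> \<le> onorm ((*v) A) ^ k * (onorm ((*v) A) * norm v)"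
    by (intro mult_left_mono onorm zero_le_power onorm_pos_le) auto
  finally show ?case by (simp add: algebra_simps)
qed

lemma norm_matrix_le_onorm:
  fixes M :: "real^'n^'m"
  shows "norm M \<le> real CARD('m) * real CARD('n) * onorm ((*v) M)"
proof -
  have "norm M \<le> (\<Sum>i\<in>UNIV. norm (M $ i))"
    unfolding norm_vec_def by (rule L2_set_le_sum) auto
  also have "\<dots> \<le> (\<Sum>i\<in>(UNIV::'m set). \<Sum>j\<in>(UNIV::'n set). onorm ((*v) M))"
    by (intro sum_mono order_trans[OF norm_le_l1_cart] matrix_component_le_onorm)
  finally show ?thesis by simp
qed

lemma summable_mat_exp:
  fixes A :: "real^'n^'n"
  shows "summable (\<lambda>k. (1 / fact k) *\<^sub>R mat_pow A k)"
proof (rule summable_comparison_test)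
  let ?c = "real CARD('n) * real CARD('n)"
  let ?K = "onorm ((*v) A)"
  show "summable (\<lambda>k. ?c * (inverse (fact k) * ?K ^ k))"
    by (intro summable_mult summable_exp)
  show "\<exists>N. \<forall>n\<ge>N. norm ((1 / fact n) *\<^sub>R mat_pow A n) \<le> ?c * (inverse (fact n) * ?K ^ n)"
  proof (intro exI allI impI)
    fix n :: nat
    have "norm (mat_pow A n) \<le> ?c * onorm ((*v) (mat_pow A n))"
      by (rule norm_matrix_le_onorm)
    also have "\<dots> \<le> ?c * ?K ^ n"
      by (intro mult_left_mono onorm_le) (auto simp: norm_mat_pow_mult_vector_le)
    finally show "norm ((1 / fact n) *\<^sub>R mat_pow A n) \<le> ?c * (inverse (fact n) * ?K ^ n)"
      by (simp add: field_simps)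
  qed
qed

lemma bounded_linear_matrix_mult_left: "bounded_linear (\<lambda>M::real^'n^'n. A ** M)"
  unfolding linear_conv_bounded_linear[symmetric]
  by (rule linearI) (simp_all add: matrix_add_ldistrib matrix_scalar_ac scalar_matrix_assoc)

lemma bounded_linear_matrix_mult_right: "bounded_linear (\<lambda>M::real^'n^'n. M ** A)"
  unfolding linear_conv_bounded_linear[symmetric]
  by (rule linearI)
    (simp_all add: matrix_matrix_mult_def vec_eq_iff sum.distrib distrib_right sum_distrib_left mult.assoc)

lemma bounded_linear_matrix_vector_mult_left: "bounded_linear (\<lambda>M::real^'n^'m. M *v v)"
  unfolding linear_conv_bounded_linear[symmetric]
  by (rule linearI) (simp_all add: matrix_vector_mult_add_rdistrib scaleR_matrix_vector_assoc)

lemma mat_exp_commute: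
  fixes A B :: "real^'n^'n"
  assumes "A ** B = B ** A"
  shows "A ** mat_exp B = mat_exp B ** A"
proof -
  have "A ** mat_exp B = (\<Sum>k. A ** ((1 / fact k) *\<^sub>R mat_pow B k))"
    unfolding mat_exp_def
    by (rule bounded_linear.suminf[OF bounded_linear_matrix_mult_left summable_mat_exp])
  also have "\<dots> = (\<Sum>k. ((1 / fact k) *\<^sub>R mat_pow B k) ** A)"
    by (simp add: matrix_scalar_ac scalar_matrix_assoc[symmetric] mat_pow_commute[OF assms])
  also have "\<dots> = mat_exp B ** A"
    unfolding mat_exp_def
    by (rule bounded_linear.suminf[OF bounded_linear_matrix_mult_right summable_mat_exp, symmetric])
  finally show ?thesis .
qed

lemma mat_exp_conj:
  fixes S :: "real^'n^'n"
  assumes "S ** S = mat 1"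
  shows "mat_exp (S ** A ** S) = S ** mat_exp A ** S"
proof -
  have "bounded_linear (\<lambda>M::real^'n^'n. S ** M ** S)"
    using bounded_linear_compose[OF bounded_linear_matrix_mult_right[of S]
        bounded_linear_matrix_mult_left[of S]]
    by simp
  then have "S ** mat_exp A ** S = (\<Sum>k. S ** ((1 / fact k) *\<^sub>R mat_pow A k) ** S)"
    unfolding mat_exp_def by (rule bounded_linear.suminf[OF _ summable_mat_exp])
  also have "\<dots> = mat_exp (S ** A ** S)"
    unfolding mat_exp_def
    by (simp add: matrix_scalar_ac scalar_matrix_assoc[symmetric] mat_pow_conj[OF assms])
  finally show ?thesis ..
qed

lemma mat_exp_mult_vector_sums:
  fixes A :: "real^'n^'n"
  shows "(\<lambda>n. \<Sum>i<n. (h ^ i / fact i) *\<^sub>R (mat_pow A i *v v)) \<longlonglongrightarrow> mat_exp (h *\<^sub>R A) *v v"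
proof -
  have "(\<lambda>n. (\<Sum>i<n. (1 / fact i) *\<^sub>R mat_pow (h *\<^sub>R A) i) *v v) \<longlonglongrightarrow> mat_exp (h *\<^sub>R A) *v v"
    unfolding mat_exp_def
    by (rule bounded_linear.tendsto[OF bounded_linear_matrix_vector_mult_left
          summable_LIMSEQ[OF summable_mat_exp]])
  moreover have "(\<Sum>i<n. (1 / fact i) *\<^sub>R mat_pow (h *\<^sub>R A) i) *v v
      = (\<Sum>i<n. (h ^ i / fact i) *\<^sub>R (mat_pow A i *v v))" for n
    by (induction n)
      (simp_all add: matrix_vector_mult_add_rdistrib mat_pow_scaleR scaleR_matrix_vector_assoc[symmetric])
  ultimately show ?thesis by simp
qed

section \<open>Linear differential equations\<close>

text \<open>Taylor's theorem with integral remainder: the \<open>m\<close>-th derivative of a solution is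
  \<open>A^m u\<close>, so with \<open>K = \<parallel>A\<parallel>\<close> and \<open>B\<close> a bound for \<open>u\<close> the remainder of order \<open>n\<close> is
  at most \<open>K B h (K h)^n / n!\<close>, where \<open>h = b - a\<close>.\<close>

lemma linear_ode_taylor_sums:
  fixes A :: "real^'n^'n" and u :: "real \<Rightarrow> real^'n"
  assumes ab: "a \<le> b"
    and D: "\<And>t. t \<in> {a..b} \<Longrightarrow> (u has_vector_derivative A *v u t) (at t within {a..b})"
  shows "(\<lambda>n. \<Sum>i<Suc n. ((b - a) ^ i / fact i) *\<^sub>R (mat_pow A i *v u a)) \<longlonglongrightarrow> u b"
proof -
  define h where "h = b - a"
  define K where "K = onorm ((*v) A)"
  have K0: "0 \<le> K" unfolding K_def by (rule onorm_pos_le) simp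
  have h0: "0 \<le> h" using ab by (simp add: h_def)
  have "continuous_on {a..b} u"
    using D by (meson continuous_on_eq_continuous_within has_vector_derivative_continuous)
  then have "bounded (u ` {a..b})"
    by (intro compact_imp_bounded compact_continuous_image compact_Icc)
  then obtain B where B: "\<And>t. t \<in> {a..b} \<Longrightarrow> norm (u t) \<le> B" and B0: "0 \<le> B"
    unfolding bounded_pos by (meson imageI less_imp_le)
  define Df where "Df m t = mat_pow A m *v u t" for m t
  have Df: "(Df m has_vector_derivative Df (Suc m) t) (at t within {a..b})" if "t \<in> {a..b}" for m t
    using bounded_linear.has_vector_derivative[OF matrix_vector_mul_bounded_linear D[OF that]]
    unfolding Df_def by (simp add: matrix_vector_mul_assoc mat_pow_commute[OF refl])
  define S where "S n = (\<Sum>i<Suc n. (h ^ i / fact i) *\<^sub>R Df i a)" for n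
  define C where "C n = K * B * h * (inverse (fact n) * (K * h) ^ n)" for n
  have remainder: "norm (u b - S n) \<le> C n" for n
  proof -
    have "((\<lambda>t. ((b - t) ^ (Suc n - 1) / fact (Suc n - 1)) *\<^sub>R Df (Suc n) t)
        has_integral u b - S n) {a..b}"
      unfolding S_def h_def
      by (rule Taylor_has_integral[where Df = Df and f = u]) (use Df ab in \<open>auto simp: Df_def\<close>)
    moreover have "norm (((b - t) ^ (Suc n - 1) / fact (Suc n - 1)) *\<^sub>R Df (Suc n) t)
        \<le> (h ^ n / fact n) * (K ^ Suc n * B)" if "t \<in> cbox a b" for t
    proof -
      have "norm (Df (Suc n) t) \<le> K ^ Suc n * norm (u t)"
        unfolding Df_def K_def by (rule norm_mat_pow_mult_vector_le)
      also have "\<dots> \<le> K ^ Suc n * B"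
        using that by (intro mult_left_mono B) (auto simp: K0)
      finally have Df_bound: "norm (Df (Suc n) t) \<le> K ^ Suc n * B" .
      have coeff_bound: "\<bar>(b - t) ^ n / fact n\<bar> \<le> h ^ n / fact n"
        using that by (auto simp: h_def power_abs intro!: divide_right_mono power_mono)
      show ?thesis
        using mult_mono[OF coeff_bound Df_bound] by (simp add: B0 K0 h0)
    qed
    ultimately have "norm (u b - S n) \<le> (h ^ n / fact n) * (K ^ Suc n * B) * measure lborel (cbox a b)"
      by (intro has_integral_bound) (auto simp: B0 K0 h0)
    also have "\<dots> = C n"
      using ab unfolding C_def power_mult_distrib by (simp add: h_def[symmetric] field_simps)
    finally show ?thesis .
  qed
  have "C \<longlonglongrightarrow> 0"
    unfolding C_def by (intro tendsto_mult_right_zero summable_LIMSEQ_zero summable_exp)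
  then have "(\<lambda>n. u b - S n) \<longlonglongrightarrow> 0"
    by (rule Lim_null_comparison[rotated]) (simp add: remainder)
  then have "S \<longlonglongrightarrow> u b"
    using tendsto_diff[OF tendsto_const[of "u b"]] by fastforce
  then show ?thesis
    unfolding S_def Df_def h_def .
qed

lemma linear_ode_mat_exp:
  fixes A :: "real^'n^'n" and u :: "real \<Rightarrow> real^'n"
  assumes "a \<le> b"
    and "\<And>t. t \<in> {a..b} \<Longrightarrow> (u has_vector_derivative A *v u t) (at t within {a..b})"
  shows "u b = mat_exp ((b - a) *\<^sub>R A) *v u a"
  using LIMSEQ_unique[OF linear_ode_taylor_sums[OF assms] LIMSEQ_Suc[OF mat_exp_mult_vector_sums]] .

lemma affine_ode_mat_exp:
  fixes A :: "real^'n^'n" and u :: "real \<Rightarrow> real^'n"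
  assumes "a \<le> b"
    and D: "\<And>t. t \<in> {a..b} \<Longrightarrow> (u has_vector_derivative A *v (u t - d)) (at t within {a..b})"
  shows "u b - d = mat_exp ((b - a) *\<^sub>R A) *v (u a - d)"
proof (rule linear_ode_mat_exp[where u = "\<lambda>t. u t - d"])
  fix t assume "t \<in> {a..b}"
  from has_vector_derivative_diff[OF D[OF this] has_vector_derivative_const]
  show "((\<lambda>t. u t - d) has_vector_derivative A *v (u t - d)) (at t within {a..b})"
    by simp
qed fact

section \<open>Matrix inverses\<close>

lemma matrix_inv_left:
  fixes A :: "real^'n^'m"
  assumes "invertible A"
  shows "matrix_inv A ** A = mat 1"
  using someI_ex[OF assms[unfolded invertible_def]] unfolding matrix_inv_def by simp

lemma matrix_inv_right:
  fixes A :: "real^'n^'m"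
  assumes "invertible A"
  shows "A ** matrix_inv A = mat 1"
  using someI_ex[OF assms[unfolded invertible_def]] unfolding matrix_inv_def by simp

lemma invertible_mult_vector_eq_0:
  fixes A :: "real^'n^'n"
  assumes "invertible A" and "A *v v = 0"
  shows "v = 0"
  using assms matrix_left_invertible_ker unfolding invertible_def by blast

lemma matrix_inv_mat_exp_minus_one:
  fixes A :: "real^'n^'n"
  assumes "invertible A"
  shows "matrix_inv A ** (mat_exp (c *\<^sub>R A) - mat 1) *v - (A *v d) = d - mat_exp (c *\<^sub>R A) *v d"
proof -
  define E where "E = mat_exp (c *\<^sub>R A)"
  have "A ** E = E ** A"
    unfolding E_def by (rule mat_exp_commute) (simp add: matrix_scalar_ac scalar_matrix_assoc[symmetric])
  then have "(E - mat 1) *v (A *v d) = A *v ((E - mat 1) *v d)"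
    by (simp only: matrix_vector_mult_diff_rdistrib matrix_vector_mult_diff_distrib)
      (simp add: matrix_vector_mul_assoc)
  then have "matrix_inv A *v ((E - mat 1) *v (A *v d)) = (E - mat 1) *v d"
    by (simp add: matrix_vector_mul_assoc matrix_mul_assoc matrix_inv_left[OF assms])
  then show ?thesis
    unfolding E_def[symmetric]
    by (simp add: matrix_vector_mul_assoc[symmetric] linear_neg algebra_simps)
qed

lemma half_period_fixpoint:
  fixes P :: "real^'n^'n"
  assumes inv: "invertible (mat 1 - P ** P)"
    and eq: "(mat 1 - P ** P) *v x = - (P *v d) - P *v (P *v d)"
  shows "P *v (x - d) = x"
proof -
  define z where "z = P *v (x - d) - x"
  have "(mat 1 - P ** P) *v z
      = P *v ((mat 1 - P ** P) *v x) - (mat 1 - P ** P) *v x - P *v d + P *v (P *v (P *v d))"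
    unfolding z_def by (simp add: matrix_vector_mul_assoc[symmetric] algebra_simps)
  also have "\<dots> = 0"
    unfolding eq by (simp add: linear_neg algebra_simps)
  finally have "z = 0"
    using invertible_mult_vector_eq_0[OF inv] by blast
  then show ?thesis
    unfolding z_def by simp
qed

section \<open>The circuit\<close>

definition voltage_reflection :: "real^2^2" where
  "voltage_reflection = vector [vector [1, 0], vector [0, -1]]"

lemma voltage_reflection_square: "voltage_reflection ** voltage_reflection = mat 1"
  by (simp add: voltage_reflection_def vec_eq_iff forall_2 matrix_matrix_mult_def sum_2 mat_def)

lemma A2_eq_conj_A1: "A2 R L C = voltage_reflection ** A1 R L C ** voltage_reflection"
  by (simp add: voltage_reflection_def A1_def A2_def vec_eq_iff forall_2 matrix_matrix_mult_def sum_2)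

lemma mat_exp_A2:
  "mat_exp (c *\<^sub>R A2 R L C) = voltage_reflection ** mat_exp (c *\<^sub>R A1 R L C) ** voltage_reflection"
  using mat_exp_conj[OF voltage_reflection_square, of "c *\<^sub>R A1 R L C"]
  by (simp add: A2_eq_conj_A1 matrix_scalar_ac scalar_matrix_assoc)

lemma b1_eq_equilibrium: "b1 L Vdc = - (A1 R L C *v vector [0, Vdc])"
  by (simp add: A1_def b1_def vec_eq_iff forall_2 matrix_vector_mult_def sum_2)

lemma voltage_reflection_equilibrium:
  "voltage_reflection *v vector [0, Vdc] = - vector [0, Vdc]"
  by (simp add: voltage_reflection_def vec_eq_iff forall_2 matrix_vector_mult_def sum_2)

lemma voltage_reflection_current: "(voltage_reflection *v v) $ 1 = v $ 1"
  by (simp add: voltage_reflection_def matrix_vector_mult_def sum_2)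

lemma invertible_A1:
  assumes "L > 0" "C > 0"
  shows "invertible (A1 R L C)"
  unfolding invertible_def
  by (rule exI[of _ "vector [vector [0, C], vector [-L, -R * C]]"])
    (use assms in \<open>simp add: A1_def vec_eq_iff forall_2 matrix_matrix_mult_def sum_2 mat_def field_simps\<close>)

lemma periodic_initial_value_fixpoint:
  fixes R L C Vdc c :: real
  defines "P \<equiv> voltage_reflection ** mat_exp (c *\<^sub>R A1 R L C)"
  assumes "L > 0" "C > 0"
    and inv: "invertible (mat 1 - mat_exp (c *\<^sub>R A2 R L C) ** mat_exp (c *\<^sub>R A1 R L C))"
    and init: "x0 = matrix_inv (mat 1 - mat_exp (c *\<^sub>R A2 R L C) ** mat_exp (c *\<^sub>R A1 R L C))
        *v (mat_exp (c *\<^sub>R A2 R L C) ** matrix_inv (A1 R L C)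
            ** (mat_exp (c *\<^sub>R A1 R L C) - mat 1) *v b1 L Vdc)"
  shows "P *v (x0 - vector [0, Vdc]) = x0"
proof -
  define S where "S = voltage_reflection"
  define E where "E = mat_exp (c *\<^sub>R A1 R L C)"
  define d :: "real^2" where "d = vector [0, Vdc]"
  have E2: "mat_exp (c *\<^sub>R A2 R L C) = S ** E ** S"
    unfolding S_def E_def by (rule mat_exp_A2)
  have M: "mat 1 - mat_exp (c *\<^sub>R A2 R L C) ** E = mat 1 - P ** P"
    unfolding E2 P_def S_def E_def by (simp add: matrix_mul_assoc)
  have "(mat_exp (c *\<^sub>R A2 R L C) ** matrix_inv (A1 R L C) ** (E - mat 1)) *v b1 L Vdc
      = S ** E ** S *v (d - E *v d)"
    using matrix_inv_mat_exp_minus_one[OF invertible_A1[OF assms(2,3)], where c = c and d = d]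
    by (simp add: E2 E_def d_def b1_eq_equilibrium[of L Vdc R C] matrix_vector_mul_assoc[symmetric])
  also have "\<dots> = - (P *v d) - P *v (P *v d)"
    unfolding P_def S_def E_def[symmetric] d_def
    by (simp add: voltage_reflection_equilibrium matrix_vector_mul_assoc[symmetric] linear_neg
        algebra_simps)
  finally have "(mat 1 - P ** P) *v x0 = - (P *v d) - P *v (P *v d)"
    using init matrix_inv_right[OF inv] unfolding E_def[symmetric] M
    by (simp add: matrix_vector_mul_assoc)
  with inv show ?thesis
    unfolding E_def[symmetric] M d_def by (rule half_period_fixpoint)
qed

theorem proposition1:
  fixes R L C Vdc T :: real and x :: "real \<Rightarrow> real^2"
  assumes pos: "R > 0" "L > 0" "C > 0" "Vdc > 0" "T > 0"
    and inv: "invertible (mat 1 - mat_exp ((T / 2) *\<^sub>R A2 R L C) ** mat_exp ((T / 2) *\<^sub>R A1 R L C))"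
    and cont: "continuous_on {0..} x"
    and ode1: "\<And>(k::nat) t. k \<ge> 1 \<Longrightarrow> t \<in> {(real k - 1) * T .. (real k - 1) * T + T / 2} \<Longrightarrow>
       (x has_vector_derivative (A1 R L C *v x t + b1 L Vdc))
         (at t within {(real k - 1) * T .. (real k - 1) * T + T / 2})"
    and ode2: "\<And>(k::nat) t. k \<ge> 1 \<Longrightarrow> t \<in> {(real k - 1) * T + T / 2 .. real k * T} \<Longrightarrow>
       (x has_vector_derivative (A2 R L C *v x t))
         (at t within {(real k - 1) * T + T / 2 .. real k * T})"
    and init: "x 0 = matrix_inv (mat 1 - mat_exp ((T / 2) *\<^sub>R A2 R L C) ** mat_exp ((T / 2) *\<^sub>R A1 R L C))
        *v (mat_exp ((T / 2) *\<^sub>R A2 R L C) ** matrix_inv (A1 R L C)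
            ** (mat_exp ((T / 2) *\<^sub>R A1 R L C) - mat 1) *v b1 L Vdc)"
  shows "x 0 $ 1 = x (T / 2) $ 1 \<and> x (T / 2) $ 1 = x T $ 1"
proof -
  define S where "S = voltage_reflection"
  define E where "E = mat_exp ((T / 2) *\<^sub>R A1 R L C)"
  define d :: "real^2" where "d = vector [0, Vdc]"
  have fixpoint: "S *v (E *v (x 0 - d)) = x 0"
    using periodic_initial_value_fixpoint[OF pos(2,3) inv init]
    by (simp add: S_def E_def d_def matrix_vector_mul_assoc)
  have "x (T / 2) - d = mat_exp ((T / 2 - 0) *\<^sub>R A1 R L C) *v (x 0 - d)"
  proof (rule affine_ode_mat_exp)
    fix t assume "t \<in> {0..T / 2}"
    then show "(x has_vector_derivative A1 R L C *v (x t - d)) (at t within {0..T / 2})"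
      using ode1[of 1 t]
      by (simp add: d_def b1_eq_equilibrium[of L Vdc R C] matrix_vector_mult_diff_distrib)
  qed (use pos in simp)
  then have "S *v (x (T / 2) - d) = x 0"
    using fixpoint by (simp add: E_def)
  then have half: "S *v x (T / 2) = x 0 - d"
    by (simp add: S_def d_def matrix_vector_mult_diff_distrib voltage_reflection_equilibrium eq_diff_eq)
  have "x T = mat_exp ((T - T / 2) *\<^sub>R A2 R L C) *v x (T / 2)"
  proof (rule linear_ode_mat_exp)
    fix t assume "t \<in> {T / 2..T}"
    then show "(x has_vector_derivative A2 R L C *v x t) (at t within {T / 2..T})"
      using ode2[of 1 t] by simp
  qed (use pos in simp)
  also have "\<dots> = S *v (E *v (S *v x (T / 2)))"
    by (simp add: mat_exp_A2 S_def E_def matrix_vector_mul_assoc matrix_mul_assoc)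
  finally have "x T = x 0"
    using fixpoint by (simp add: half)
  moreover have "x (T / 2) $ 1 = x 0 $ 1"
    using arg_cong[OF half, of "\<lambda>v. v $ 1"] by (simp add: S_def voltage_reflection_current d_def)
  ultimately show ?thesis
    by simp
qed

end
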